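(* Let $\gamma$ be a Jordan curve in $\mathbb{R}^2$ and let $\gamma[a,b]$ (with $a\neq b$ points of $\gamma$) be contained in an open disk $D$ of radius $1$. Suppose there is an open disk $D_r$ of radius $r\le 1$ such that $\gamma[a,b]\cap\overline{D_r}=\{a,b\}$ and $\gamma$ winds positively around $D_r$ from $a$ to $b$. Then $\gamma$ does not have bounded convex curvature.
   Context: For a Jordan curve $\gamma$, $\operatorname{Int}\gamma$ and $\operatorname{Ext}\gamma$ are the bounded and unbounded components of $\mathbb{R}^2\setminus\gamma$. A parametrization of $\gamma$ is positively oriented if its argument variation (total change of a continuous argument of $\varphi(t)-q$) around every $q\in\operatorname{Int}\gamma$ equals $2\pi$; for circles this is the counterclockwise orientation. For distinct $a,b\in\gamma$, $\gamma[a,b]$ denotes the closed subarc of $\gamma$ traversed from $a$ to $b$ along the positive orientation (applied also to circles $\partial D$), and $\gamma(a,b)=\gamma[a,b]\setminus\{a,b\}$. If $a,b\in\gamma$ are distinct and $D'$ is an open disk with $a,b\in\partial D'$ and $\gamma[a,b]\cap\overline{D'}=\{a,b\}$, let $R$ be the open region bounded by the Jordan curve $\gamma[a,b]\cup\partial D'[a,b]$; then either $D'\subset R$ or $D'\cap R=\emptyset$, and in the latter case $\gamma$ is said to wind positively around $D'$ from $a$ to $b$. $B(x,\varepsilon)$ is the open disk of center $x$ and radius $\varepsilon$. A Jordan curve $\gamma$ has bounded convex curvature if for every $x\in\gamma$ there exist an open disk $U_x$ of radius $1$ and $\varepsilon_x>0$ with $x\in\partial U_x$ and $B(x,\varepsilon_x)\cap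 U_x\subset\operatorname{Int}\gamma$. *)

theory Defs
  imports "HOL-Complex_Analysis.Complex_Analysis"
begin

text \<open>The plane R^2 is modelled by the complex numbers.\<close>

definition jordan_curve :: "complex set \<Rightarrow> bool" where
  "jordan_curve C \<longleftrightarrow> (\<exists>g. simple_path g \<and> pathfinish g = pathstart g \<and> path_image g = C)"

text \<open>Int of a Jordan curve: the bounded component of the complement (library: inside).
  Positively oriented parametrization: winding number (argument variation / 2 pi) 1
  around every interior point.\<close>

definition pos_param :: "complex set \<Rightarrow> (real \<Rightarrow> complex) \<Rightarrow> bool" where
  "pos_param C g \<longleftrightarrow> simple_path g \<and> pathfinish g = pathstart g \<and> path_image g = C \<and>
     (\<forall>q\<in>inside C. winding_number g q = 1)"

text \<open>The closed subarc C[a,b] traversed from a to b along the positive orientation.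
  (Well defined for distinct a, b on a Jordan curve, independent of the chosen
  positively oriented parametrization starting at a.)\<close>

definition pos_arc :: "complex set \<Rightarrow> complex \<Rightarrow> complex \<Rightarrow> complex set" where
  "pos_arc C a b = (SOME A. \<exists>g t. pos_param C g \<and> g 0 = a \<and> 0 < t \<and> t < 1 \<and> g t = b \<and>
                                  A = g ` {0..t})"

definition winds_positively ::
  "complex set \<Rightarrow> complex \<Rightarrow> real \<Rightarrow> complex \<Rightarrow> complex \<Rightarrow> bool" where
  "winds_positively C c r a b \<longleftrightarrow>
     a \<in> sphere c r \<and> b \<in> sphere c r \<and>
     pos_arc C a b \<inter> cball c r = {a, b} \<and>
     ball c r \<inter> inside (pos_arc C a b \<union> pos_arc (sphere c r) a b) = {}"

definition bounded_convex_curvature :: "complex set \<Rightarrow> bool" where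
  "bounded_convex_curvature C \<longleftrightarrow>
     (\<forall>x\<in>C. \<exists>u \<epsilon>. x \<in> sphere u 1 \<and> \<epsilon> > 0 \<and> ball x \<epsilon> \<inter> ball u 1 \<subseteq> inside C)"

end

theory Submission
  imports Defs
begin

text \<open>The arc G = C[a,b] and the circular arc A = \<partial>D_r[a,b] bound a Jordan region R which,
  as C winds positively around D_r, is disjoint from D_r and lies just outside the circle near
  the inner points of A. Moving a center p from the center of D_r to that of D, one finds p such
  that the farthest points of closure R from p are at distance \<rho> < 1 while a and b are nearer.
  A farthest point can lie neither in the open set R nor on A, so it is an inner point x of G,
  near which Int C coincides with R. The unit disk U_x of bounded convex curvature touches x
  from inside C, and since \<rho> < 1 it leaves the disk of radius \<rho> about p near x: this gives a
  point of R farther from p than x.\<close>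

lemma norm_add_orthonormal_sq:
  fixes d e w :: "'a::real_inner"
  assumes "norm e = 1" "norm w = 1" "e \<bullet> w = 0"
  shows "(norm (d + a *\<^sub>R e + t *\<^sub>R w))\<^sup>2 = (norm d)\<^sup>2 + 2 * (a * (d \<bullet> e)) + 2 * (t * (d \<bullet> w)) + a\<^sup>2 + t\<^sup>2"
  using assms
  by (simp add: power2_norm_eq_inner inner_add_left inner_add_right inner_commute algebra_simps)
    (simp add: power2_eq_square flip: power2_norm_eq_inner)

lemma inner_complex_rotate: "(e::complex) \<bullet> (\<i> * e) = 0"
  by (simp add: inner_complex_def algebra_simps)

lemma exists_farther_point_nearby:
  fixes x p :: "'a::{real_normed_vector,perfect_space}"
  assumes "0 < e"
  shows "\<exists>z\<in>ball x e. dist p x < dist p z"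
proof (cases "x = p")
  case True
  obtain z where "z \<noteq> x" "dist z x < e"
    using perfect_choose_dist[OF assms] by blast
  with True show ?thesis by (auto simp: dist_commute)
next
  case False
  define z where "z = x + (e / (2 * dist x p)) *\<^sub>R (x - p)"
  have "z - p = (1 + e / (2 * dist x p)) *\<^sub>R (x - p)"
    by (simp add: z_def algebra_simps)
  then have "dist z p = (1 + e / (2 * dist x p)) * dist x p"
    using assms by (simp add: dist_norm)
  also have "\<dots> = dist x p + e / 2"
    using False by (simp add: field_simps)
  finally have "dist p x < dist p z"
    using assms by (simp add: dist_commute)
  moreover have "dist x z = e / 2"
    using False assms by (simp add: z_def dist_norm)
  ultimately show ?thesis
    using assms by (intro bexI[of _ z]) auto
qed

lemma exists_farther_point_outside_cball:
  fixes y c p :: complex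
  assumes "y \<in> sphere c r" "0 < r" "0 < \<delta>"
  shows "\<exists>z\<in>ball y \<delta>. z \<notin> cball c r \<and> dist p y < dist p z"
proof -
  define e where "e = (y - c) / of_real r"
  define w where "w = \<i> * e"
  have "e \<bullet> w = 0"
    unfolding w_def by (rule inner_complex_rotate)
  moreover have "norm e = 1" "y - c = r *\<^sub>R e"
    using assms by (auto simp: e_def dist_norm norm_divide norm_minus_commute scaleR_conv_of_real)
  ultimately have e: "norm e = 1" "norm w = 1" "e \<bullet> w = 0" "y - c = r *\<^sub>R e"
    by (auto simp: w_def norm_mult)
  define t where "t = (if 0 \<le> (y - p) \<bullet> w then \<delta> / 2 else - \<delta> / 2)"
  have t: "0 \<le> t * ((y - p) \<bullet> w)" "0 < t\<^sup>2" "\<bar>t\<bar> < \<delta>"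
    using assms(3) by (auto simp: t_def mult_le_0_iff)
  define z where "z = y + t *\<^sub>R w"
  have zy: "dist y z < \<delta>"
    using t e by (simp add: z_def dist_norm)
  have "(norm (z - c))\<^sup>2 = r\<^sup>2 + t\<^sup>2"
    using norm_add_orthonormal_sq[OF e(1-3), of 0 r t] e(4) by (simp add: z_def algebra_simps)
  then have zc: "r < dist c z"
    using t(2) assms(2) by (simp add: dist_norm norm_minus_commute power2_less_imp_less)
  have "(norm (z - p))\<^sup>2 = (norm (y - p))\<^sup>2 + 2 * (t * ((y - p) \<bullet> w)) + t\<^sup>2"
    using norm_add_orthonormal_sq[OF e(1-3), of "y - p" 0 t] by (simp add: z_def algebra_simps)
  then have "(norm (y - p))\<^sup>2 < (norm (z - p))\<^sup>2"
    using t(1,2) by linarith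
  then have "norm (y - p) < norm (z - p)"
    by (rule power2_less_imp_less) simp
  then have "dist p y < dist p z"
    by (metis dist_commute dist_norm)
  then show ?thesis
    using zy zc by (intro bexI[of _ z]) auto
qed

text \<open>A circle of radius less than \<rho> bends more sharply than one of radius \<rho>, so near a
  common point the larger disk is not contained in the smaller one.\<close>

lemma exists_farther_point_in_ball:
  fixes x u p :: complex
  assumes "x \<in> sphere u \<rho>" "dist p x < \<rho>" "0 < \<delta>"
  shows "\<exists>z\<in>ball x \<delta>. z \<in> ball u \<rho> \<and> dist p x < dist p z"
proof -
  define d where "d = dist p x"
  have d: "0 \<le> d" "d < \<rho>" using assms(2) by (auto simp: d_def)
  define e where "e = (u - x) / of_real \<rho>"
  define w where "w = \<i> * e"
  have "e \<bullet> w = 0"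
    unfolding w_def by (rule inner_complex_rotate)
  moreover have "norm e = 1" "u - x = \<rho> *\<^sub>R e"
    using assms d by (auto simp: e_def dist_norm norm_divide scaleR_conv_of_real)
  ultimately have e: "norm e = 1" "norm w = 1" "e \<bullet> w = 0" "u - x = \<rho> *\<^sub>R e"
    by (auto simp: w_def norm_mult)
  define s where "s = min \<rho> (\<delta>\<^sup>2 / (2 * (\<rho> + d)))"
  have s: "0 < s" "s \<le> \<rho>" "(\<rho> + d) * s < \<delta>\<^sup>2"
  proof -
    show "0 < s" "s \<le> \<rho>" using d assms(3) by (auto simp: s_def)
    have "(\<rho> + d) * s \<le> (\<rho> + d) * (\<delta>\<^sup>2 / (2 * (\<rho> + d)))"
      using d by (intro mult_left_mono) (auto simp: s_def)
    also have "\<dots> = \<delta>\<^sup>2 / 2"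
      using d by (simp add: field_simps)
    finally have "(\<rho> + d) * s \<le> \<delta>\<^sup>2 / 2" .
    moreover have "0 < \<delta>\<^sup>2" using assms(3) by simp
    ultimately show "(\<rho> + d) * s < \<delta>\<^sup>2" by linarith
  qed
  define n where "n = x - p"
  \<comment> \<open>choose s e + t w of squared length (\<rho> + d) s: it moves the squared distance to u
    down by (\<rho> - d) s and the one to p up by at least (\<rho> - d) s\<close>
  define t where "t = (if 0 \<le> n \<bullet> w then 1 else -1) * sqrt ((\<rho> + d) * s - s\<^sup>2)"
  have "s\<^sup>2 \<le> (\<rho> + d) * s"
    using s d by (simp add: power2_eq_square mult_right_mono)
  then have t: "0 \<le> t * (n \<bullet> w)" "t\<^sup>2 = (\<rho> + d) * s - s\<^sup>2"
    by (auto simp: t_def mult_le_0_iff power_mult_distrib)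
  define z where "z = x + s *\<^sub>R e + t *\<^sub>R w"
  have "(norm (z - x))\<^sup>2 = (\<rho> + d) * s"
    using norm_add_orthonormal_sq[OF e(1-3), of 0 s t] t by (simp add: z_def)
  then have "dist x z < \<delta>"
    using s assms(3) by (simp add: dist_norm norm_minus_commute power2_less_imp_less)
  moreover have "(norm (z - u))\<^sup>2 = \<rho>\<^sup>2 - (\<rho> - d) * s"
  proof -
    have "z - u = 0 + (s - \<rho>) *\<^sub>R e + t *\<^sub>R w"
      using e(4) by (simp add: z_def algebra_simps)
    then have "(norm (z - u))\<^sup>2 = (s - \<rho>)\<^sup>2 + t\<^sup>2"
      using norm_add_orthonormal_sq[OF e(1-3), of 0 "s - \<rho>" t] by simp
    then show ?thesis
      using t(2) by (simp add: power2_diff algebra_simps)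
  qed
  then have "dist u z < \<rho>"
    using s d by (simp add: dist_norm norm_minus_commute power2_less_imp_less)
  moreover have "d\<^sup>2 < (norm (z - p))\<^sup>2"
  proof -
    have n: "norm n = d"
      by (simp add: n_def d_def dist_norm norm_minus_commute)
    have "z - p = n + s *\<^sub>R e + t *\<^sub>R w"
      by (simp add: z_def n_def)
    then have "(norm (z - p))\<^sup>2 = d\<^sup>2 + 2 * (s * (n \<bullet> e)) + 2 * (t * (n \<bullet> w)) + s\<^sup>2 + t\<^sup>2"
      by (simp only: norm_add_orthonormal_sq[OF e(1-3)] n)
    moreover have "- (d * s) \<le> s * (n \<bullet> e)"
      using Cauchy_Schwarz_ineq2[of n e] e(1) n s mult_left_mono[of "- d" "n \<bullet> e" s]
      by (simp add: mult.commute)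
    moreover have "d * s < \<rho> * s"
      using s d by simp
    ultimately show ?thesis
      using t(1,2) distrib_right[of \<rho> d s] by linarith
  qed
  then have "dist p x < dist p z"
    by (simp add: d_def dist_norm norm_minus_commute power2_less_imp_less)
  ultimately show ?thesis by auto
qed

lemma simple_path_subarcs_Int:
  assumes "simple_path g" "t \<in> {0..1}"
  shows "g ` {0..t} \<inter> g ` {t..1} \<subseteq> {g 0, g t}"
proof
  fix x assume "x \<in> g ` {0..t} \<inter> g ` {t..1}"
  then obtain u v where uv: "u \<in> {0..t}" "v \<in> {t..1}" "x = g u" "g u = g v"
    by auto
  show "x \<in> {g 0, g t}"
  proof (cases "u = v")
    case True
    then show ?thesis using uv by auto
  next
    case False
    then have "u = 0"
      using assms uv unfolding simple_path_def loop_free_def by fastforce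
    then show ?thesis using uv by simp
  qed
qed

lemma simple_path_interior_inj:
  assumes "simple_path g" "0 < u" "u < 1" "v \<in> {0..1}" "g u = g v"
  shows "u = v"
  using assms unfolding simple_path_def loop_free_def by fastforce

lemma path_image_split:
  assumes "t \<in> {0..1}"
  shows "path_image g = g ` {0..t} \<union> g ` {t..1}"
proof -
  have "{0..1} = {0..t} \<union> {t..1::real}" using assms by auto
  then show ?thesis by (simp add: path_image_def image_Un)
qed

lemma winding_number_reversepath_inside:
  assumes "path g" "z \<in> inside (path_image g)"
  shows "winding_number (reversepath g) z = - winding_number g z"
  using assms inside_no_overlap winding_number_reversepath by blast

lemma pos_param_exists:
  assumes "jordan_curve C" "a \<in> C"
  obtains g where "pos_param C g" "g 0 = a"
proof -
  obtain g0 where g0: "simple_path g0" "pathfinish g0 = pathstart g0" "path_image g0 = C"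
    using assms(1) unfolding jordan_curve_def by blast
  obtain \<tau> where \<tau>: "\<tau> \<in> {0..1}" "g0 \<tau> = a"
    using assms(2) g0(3) unfolding path_image_def by auto
  define g where "g = shiftpath \<tau> g0"
  have g: "simple_path g" "pathfinish g = pathstart g" "path_image g = C" "g 0 = a"
    using g0 \<tau> by (simp_all add: g_def simple_path_shiftpath closed_shiftpath path_image_shiftpath)
      (simp add: shiftpath_def)
  show ?thesis
  proof (rule simple_closed_path_winding_number_inside[OF g(1)])
    assume "\<And>z. z \<in> inside (path_image g) \<Longrightarrow> winding_number g z = 1"
    then show ?thesis using that g by (auto simp: pos_param_def)
  next
    assume neg: "\<And>z. z \<in> inside (path_image g) \<Longrightarrow> winding_number g z = -1"
    have "pos_param C (reversepath g)"
      using g neg winding_number_reversepath_inside[of g] simple_path_imp_path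
      by (auto simp: pos_param_def simple_path_reversepath)
    moreover have "reversepath g 0 = a"
      using g(2,4) by (simp add: reversepath_def pathfinish_def pathstart_def)
    ultimately show ?thesis by (rule that)
  qed
qed

lemma pos_arc_eq_image:
  assumes "jordan_curve C" "a \<in> C" "b \<in> C" "a \<noteq> b"
  obtains g t where "pos_param C g" "g 0 = a" "0 < t" "t < 1" "g t = b"
    "pos_arc C a b = g ` {0..t}"
proof -
  let ?P = "\<lambda>A. \<exists>g t. pos_param C g \<and> g 0 = a \<and> 0 < t \<and> t < 1 \<and> g t = b \<and> A = g ` {0..t}"
  obtain g where g: "pos_param C g" "g 0 = a"
    using pos_param_exists[OF assms(1,2)] .
  then obtain t where t: "t \<in> {0..1}" "g t = b"
    using assms(3) unfolding pos_param_def path_image_def by auto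
  have "t \<noteq> 0" "t \<noteq> 1"
    using g t assms(4) by (auto simp: pos_param_def pathfinish_def pathstart_def)
  then have "?P (g ` {0..t})"
    using g t by (intro exI[of _ g] exI[of _ t]) auto
  then have "?P (pos_arc C a b)"
    unfolding pos_arc_def by (rule someI)
  then show ?thesis using that by blast
qed

lemma jordan_curve_sphere: "0 < r \<Longrightarrow> jordan_curve (sphere c r)"
  unfolding jordan_curve_def
  by (intro exI[of _ "circlepath c r"]) (auto simp: simple_path_circlepath)

lemma inside_sphere: "0 < r \<Longrightarrow> inside (sphere (c::complex) r) = ball c r"
  by (metis bounded_cball convex_cball frontier_cball inside_frontier_eq_interior interior_cball)

lemma connected_positive_overlap:
  fixes f g :: "'a::topological_space \<Rightarrow> real"
  assumes "connected S" "continuous_on S f" "continuous_on S g"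
    and "\<And>x. x \<in> S \<Longrightarrow> 0 < f x \<or> 0 < g x"
    and "s \<in> S" "0 < f s" "t \<in> S" "0 < g t"
  shows "\<exists>x\<in>S. 0 < f x \<and> 0 < g x"
proof (rule ccontr)
  assume disjoint: "\<not> ?thesis"
  have "openin (top_of_set S) (S \<inter> f -` {0<..})" "openin (top_of_set S) (S \<inter> g -` {0<..})"
    using assms(2,3) by (auto intro: continuous_openin_preimage_gen)
  moreover have "S \<subseteq> (S \<inter> f -` {0<..}) \<union> (S \<inter> g -` {0<..})"
    using assms(4) by auto
  ultimately show False
    using assms(1,5-8) disjoint unfolding connected_openin by blast
qed

definition max_dist :: "'a::metric_space set \<Rightarrow> 'a \<Rightarrow> real" where
  "max_dist K p = (SUP z\<in>K. dist p z)"

lemma dist_le_max_dist: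
  assumes "bounded K" "z \<in> K"
  shows "dist p z \<le> max_dist K p"
proof -
  have "bounded ((\<lambda>z. dist p z) ` K)"
    using assms(1) by (intro bounded_dist_comp) (auto simp: image_constant_conv)
  then show ?thesis
    unfolding max_dist_def using assms(2) by (intro cSUP_upper bounded_imp_bdd_above)
qed

lemma max_dist_attained:
  assumes "compact K" "K \<noteq> {}"
  obtains x where "x \<in> K" "dist p x = max_dist K p"
proof -
  obtain x where x: "x \<in> K" "\<forall>z\<in>K. dist p z \<le> dist p x"
    using continuous_attains_sup[OF assms continuous_on_dist[OF continuous_on_const continuous_on_id]]
    by auto
  then have "max_dist K p = dist p x"
    unfolding max_dist_def by (intro cSup_eq_maximum) auto
  then show ?thesis using that x by auto
qed

lemma max_dist_le_dist:
  assumes "compact K" "K \<noteq> {}"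
  shows "max_dist K p \<le> max_dist K q + dist p q"
proof -
  obtain x where x: "x \<in> K" "dist p x = max_dist K p"
    using max_dist_attained[OF assms] .
  have "dist p x \<le> dist q x + dist p q"
    by (metis dist_commute dist_triangle add.commute)
  then show ?thesis
    using x dist_le_max_dist[OF compact_imp_bounded[OF assms(1)] x(1), of q] by linarith
qed

lemma continuous_on_max_dist:
  assumes "compact K" "K \<noteq> {}"
  shows "continuous_on S (max_dist K)"
proof (rule lipschitz_on_continuous_on)
  show "1-lipschitz_on S (max_dist K)"
  proof (rule lipschitz_onI)
    fix p q
    show "dist (max_dist K p) (max_dist K q) \<le> 1 * dist p q"
      using max_dist_le_dist[OF assms, of p q] max_dist_le_dist[OF assms, of q p]
      by (simp add: dist_real_def dist_commute abs_le_iff)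
  qed simp
qed

lemma winding_number_locally_constant:
  assumes "path \<gamma>" "pathfinish \<gamma> = pathstart \<gamma>" "x \<notin> path_image \<gamma>"
  obtains \<delta> where "0 < \<delta>"
    "\<And>z. z \<in> ball x \<delta> \<Longrightarrow> z \<notin> path_image \<gamma> \<and> winding_number \<gamma> z = winding_number \<gamma> x"
proof -
  have "open {z. z \<notin> path_image \<gamma> \<and> winding_number \<gamma> z = winding_number \<gamma> x}"
    using open_winding_number_levelsets[OF assms(1,2)] .
  then obtain \<delta> where "0 < \<delta>"
    "ball x \<delta> \<subseteq> {z. z \<notin> path_image \<gamma> \<and> winding_number \<gamma> z = winding_number \<gamma> x}"
    using assms(3) by (force simp: open_contains_ball)
  then show ?thesis using that by blast
qed

lemma simple_closed_path_inside_iff_winding_number: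
  assumes "simple_path \<gamma>" "pathfinish \<gamma> = pathstart \<gamma>" "z \<notin> path_image \<gamma>"
  shows "z \<in> inside (path_image \<gamma>) \<longleftrightarrow> winding_number \<gamma> z \<noteq> 0"
proof
  assume z: "z \<in> inside (path_image \<gamma>)"
  show "winding_number \<gamma> z \<noteq> 0"
    by (rule simple_closed_path_winding_number_inside[OF assms(1)]) (use z in auto)
next
  assume "winding_number \<gamma> z \<noteq> 0"
  then have "z \<notin> outside (path_image \<gamma>)"
    using winding_number_zero_in_outside assms simple_path_imp_path by blast
  then show "z \<in> inside (path_image \<gamma>)"
    using assms(3) inside_Un_outside by blast
qed

lemma dist_linepath_less:
  fixes c c0 q :: "'a::real_normed_vector"
  assumes "dist c q \<le> \<rho>" "dist c0 q < \<rho>" "0 < t" "t \<le> 1"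
  shows "dist (linepath c c0 t) q < \<rho>"
proof -
  have "linepath c c0 t - q = (1 - t) *\<^sub>R (c - q) + t *\<^sub>R (c0 - q)"
    by (simp add: linepath_def algebra_simps)
  then have "dist (linepath c c0 t) q \<le> (1 - t) * dist c q + t * dist c0 q"
    using assms(3,4) norm_triangle_ineq[of "(1 - t) *\<^sub>R (c - q)" "t *\<^sub>R (c0 - q)"]
    by (simp add: dist_norm)
  also have "\<dots> < (1 - t) * \<rho> + t * \<rho>"
    using assms by (intro add_le_less_mono mult_left_mono mult_strict_left_mono) auto
  finally show ?thesis by (simp add: algebra_simps)
qed

text \<open>The parameters g, h are positively oriented parametrizations of C and \<partial>D_r starting at a,
  with g t0 = h s0 = b, so that g ` {0..t0} = C[a,b] and h ` {0..s0} = \<partial>D_r[a,b].\<close>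

locale arc_around_disk =
  fixes C :: "complex set" and g h :: "real \<Rightarrow> complex" and t0 s0 r :: real and a b c :: complex
  assumes g_param: "pos_param C g" "g 0 = a" "0 < t0" "t0 < 1" "g t0 = b"
    and h_param: "pos_param (sphere c r) h" "h 0 = a" "0 < s0" "s0 < 1" "h s0 = b"
    and r_pos: "0 < r" and ends_distinct: "a \<noteq> b"
    and arc_Int_cball: "g ` {0..t0} \<inter> cball c r = {a, b}"
    and ball_Int_region: "ball c r \<inter> inside (g ` {0..t0} \<union> h ` {0..s0}) = {}"
begin

definition "G = g ` {0..t0}"
definition "A = h ` {0..s0}"
definition "R = inside (G \<union> A)"
definition "j = subpath 0 t0 g +++ reversepath (subpath 0 s0 h)"

lemma g_loop: "simple_path g" "pathfinish g = pathstart g" "path_image g = C" "g 1 = a"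
  and g_positive: "\<And>z. z \<in> inside C \<Longrightarrow> winding_number g z = 1"
  using g_param by (auto simp: pos_param_def pathfinish_def pathstart_def)

lemma h_loop: "simple_path h" "pathfinish h = pathstart h" "path_image h = sphere c r" "h 1 = a"
  and h_positive: "\<And>z. z \<in> ball c r \<Longrightarrow> winding_number h z = 1"
  using h_param inside_sphere[OF r_pos] by (auto simp: pos_param_def pathfinish_def pathstart_def)

lemma C_split: "C = G \<union> g ` {t0..1}"
  using path_image_split[of t0 g] g_param g_loop(3) by (simp add: G_def)

lemma G_Int_rest: "G \<inter> g ` {t0..1} \<subseteq> {a, b}"
  using simple_path_subarcs_Int[OF g_loop(1), of t0] g_param by (simp add: G_def)

lemma sphere_split: "sphere c r = A \<union> h ` {s0..1}"
  using path_image_split[of s0 h] h_param h_loop(3) by (simp add: A_def)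

lemma A_Int_rest: "A \<inter> h ` {s0..1} \<subseteq> {a, b}"
  using simple_path_subarcs_Int[OF h_loop(1), of s0] h_param by (simp add: A_def)

lemma ends_in_G: "a \<in> G" "b \<in> G"
proof -
  have "0 \<in> {0..t0}" "t0 \<in> {0..t0}"
    using g_param by auto
  then show "a \<in> G" "b \<in> G"
    unfolding G_def using g_param(2,5) by (metis image_eqI)+
qed

lemma ends_in_A: "a \<in> A" "b \<in> A"
proof -
  have "0 \<in> {0..s0}" "s0 \<in> {0..s0}"
    using h_param by auto
  then show "a \<in> A" "b \<in> A"
    unfolding A_def using h_param(2,5) by (metis image_eqI)+
qed

lemma ends_on_sphere: "a \<in> sphere c r" "b \<in> sphere c r"
  using ends_in_A sphere_split by auto

lemma G_Int_cball: "G \<inter> cball c r = {a, b}"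
  unfolding G_def by (rule arc_Int_cball)

lemma G_Int_ball: "G \<inter> ball c r = {}"
proof -
  have "a \<notin> ball c r" "b \<notin> ball c r"
    using ends_on_sphere by auto
  moreover have "G \<inter> ball c r \<subseteq> G \<inter> cball c r"
    using ball_subset_cball by blast
  ultimately show ?thesis
    unfolding G_Int_cball by blast
qed

lemma G_Int_A: "G \<inter> A \<subseteq> {a, b}"
  using G_Int_cball sphere_split sphere_cball by blast

lemma j_loop: "simple_path j" "pathfinish j = pathstart j" "path_image j = G \<union> A"
proof -
  have "arc (subpath 0 t0 g)"
    using g_param ends_distinct by (intro arc_simple_path_subpath g_loop(1)) auto
  moreover have "arc (reversepath (subpath 0 s0 h))"
    using h_param ends_distinct by (intro arc_reversepath arc_simple_path_subpath h_loop(1)) auto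
  ultimately show "simple_path j"
    unfolding j_def using G_Int_A g_param h_param
    by (intro simple_path_join_loop) (auto simp: path_image_subpath G_def A_def)
  show "pathfinish j = pathstart j" "path_image j = G \<union> A"
    using g_param h_param by (auto simp: j_def path_image_join path_image_subpath G_def A_def)
qed

lemma R_open: "open R" and R_bounded: "bounded R" and R_nonempty: "R \<noteq> {}"
  and frontier_R: "frontier R = G \<union> A"
  using Jordan_inside_outside[OF j_loop(1,2)] j_loop(3) by (auto simp: R_def)

lemma R_Int_boundary: "R \<inter> (G \<union> A) = {}"
  by (simp add: R_def inside_no_overlap)

lemma R_Int_ball: "R \<inter> ball c r = {}"
  using ball_Int_region by (auto simp: R_def G_def A_def)

lemma in_R_iff_winding_number_j: "z \<notin> G \<union> A \<Longrightarrow> z \<in> R \<longleftrightarrow> winding_number j z \<noteq> 0"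
  using simple_closed_path_inside_iff_winding_number[OF j_loop(1,2)] j_loop(3) by (simp add: R_def)

lemma subarc_paths:
  "path (subpath 0 t0 g)" "path (subpath t0 1 g)" "path (subpath 0 s0 h)" "path (subpath s0 1 h)"
  using g_param h_param simple_path_imp_path[OF g_loop(1)] simple_path_imp_path[OF h_loop(1)]
  by auto

lemma subarc_images:
  "path_image (subpath 0 t0 g) = G" "path_image (subpath t0 1 g) = g ` {t0..1}"
  "path_image (subpath 0 s0 h) = A" "path_image (subpath s0 1 h) = h ` {s0..1}"
  using g_param h_param by (auto simp: path_image_subpath G_def A_def)

lemma subarc_ends:
  "pathstart (subpath 0 t0 g) = a" "pathfinish (subpath 0 t0 g) = b"
  "pathstart (subpath t0 1 g) = b" "pathfinish (subpath t0 1 g) = a"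
  "pathstart (subpath 0 s0 h) = a" "pathfinish (subpath 0 s0 h) = b"
  "pathstart (subpath s0 1 h) = b" "pathfinish (subpath s0 1 h) = a"
  using g_param h_param g_loop h_loop by auto

lemma winding_number_j:
  assumes "z \<notin> G" "z \<notin> A"
  shows "winding_number j z = winding_number (subpath 0 t0 g) z - winding_number (subpath 0 s0 h) z"
  using winding_number_join[of "subpath 0 t0 g" z "reversepath (subpath 0 s0 h)"]
    winding_number_reversepath[of "subpath 0 s0 h" z] subarc_paths subarc_images subarc_ends assms
  by (simp add: j_def)

lemma winding_number_g_split:
  assumes "z \<notin> C" "z \<notin> A"
  shows "winding_number g z = winding_number j z + winding_number (subpath t0 1 g +++ subpath 0 s0 h) z"
proof -
  have "winding_number g z = winding_number (subpath 0 t0 g) z + winding_number (subpath t0 1 g) z"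
    using winding_number_subpath_combine[OF simple_path_imp_path[OF g_loop(1)], of z 0 t0 1]
      g_loop g_param assms by auto
  moreover have "winding_number (subpath t0 1 g +++ subpath 0 s0 h) z =
      winding_number (subpath t0 1 g) z + winding_number (subpath 0 s0 h) z"
    using winding_number_join subarc_paths subarc_images subarc_ends assms C_split by auto
  ultimately show ?thesis
    using winding_number_j assms C_split by auto
qed

lemma winding_number_h_split:
  assumes "z \<notin> G" "z \<notin> sphere c r"
  shows "winding_number j z + winding_number h z = winding_number (subpath 0 t0 g +++ subpath s0 1 h) z"
proof -
  have "winding_number h z = winding_number (subpath 0 s0 h) z + winding_number (subpath s0 1 h) z"
    using winding_number_subpath_combine[OF simple_path_imp_path[OF h_loop(1)], of z 0 s0 1]
      h_loop h_param assms by auto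
  moreover have "winding_number (subpath 0 t0 g +++ subpath s0 1 h) z =
      winding_number (subpath 0 t0 g) z + winding_number (subpath s0 1 h) z"
    using winding_number_join subarc_paths subarc_images subarc_ends assms sphere_split by auto
  ultimately show ?thesis
    using winding_number_j assms sphere_split by auto
qed

text \<open>Across the circle near an inner point of the arc A the winding number of h drops from 1
  to 0 while that of the loop through g[0,t0] and h[s0,1] stays put; since the disk lies
  outside R, the points just outside the circle are inside R.\<close>

lemma outside_cball_near_A_in_R:
  assumes "y \<in> A" "y \<noteq> a" "y \<noteq> b"
  obtains \<delta> where "0 < \<delta>"
    "\<And>z. z \<in> ball y \<delta> \<Longrightarrow> z \<notin> cball c r \<Longrightarrow> z \<in> R \<and> winding_number j z = 1"
proof -
  let ?L = "subpath 0 t0 g +++ subpath s0 1 h"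
  have L: "path ?L" "pathfinish ?L = pathstart ?L" "path_image ?L = G \<union> h ` {s0..1}"
    using subarc_paths subarc_images subarc_ends by (auto simp: path_image_join)
  have "y \<notin> G \<union> h ` {s0..1}"
    using assms G_Int_A A_Int_rest by blast
  then obtain \<delta> where \<delta>: "0 < \<delta>"
    "\<And>z. z \<in> ball y \<delta> \<Longrightarrow> z \<notin> G \<union> h ` {s0..1} \<and> winding_number ?L z = winding_number ?L y"
    using winding_number_locally_constant[OF L(1,2)] L(3) by metis
  have "y \<in> closure (ball c r)"
    using assms(1) sphere_split r_pos by auto
  then obtain p where p: "p \<in> ball c r" "dist p y < \<delta>"
    using \<delta>(1) closure_approachable by blast
  then have "p \<in> ball y \<delta>" "p \<notin> G" "p \<notin> sphere c r" "p \<notin> A"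
    using G_Int_ball sphere_split by (auto simp: dist_commute)
  moreover have "p \<notin> R"
    using p R_Int_ball by blast
  ultimately have "winding_number ?L y = 1"
    using winding_number_h_split[of p] in_R_iff_winding_number_j[of p] h_positive[OF p(1)] \<delta>(2)
    by auto
  show ?thesis
  proof (rule that[OF \<delta>(1)])
    fix z assume z: "z \<in> ball y \<delta>" "z \<notin> cball c r"
    have "z \<notin> sphere c r"
      using z(2) sphere_cball by blast
    then have z': "z \<notin> G" "z \<notin> sphere c r" "z \<notin> A"
      using \<delta>(2)[OF z(1)] sphere_split by auto
    have "winding_number h z = 0"
      using winding_number_zero_outside[OF simple_path_imp_path[OF h_loop(1)] convex_cball h_loop(2)]
        z(2) h_loop(3) sphere_cball by blast
    then have "winding_number j z = 1"
      using winding_number_h_split[OF z'(1,2)] \<delta>(2)[OF z(1)] \<open>winding_number ?L y = 1\<close> by auto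
    then show "z \<in> R \<and> winding_number j z = 1"
      using in_R_iff_winding_number_j z' by auto
  qed
qed

lemma exists_R_outside_cball:
  obtains z where "z \<in> R" "z \<notin> cball c r" "winding_number j z = 1"
proof -
  define y where "y = h (s0 / 2)"
  have "y \<in> A"
    using h_param by (auto simp: y_def A_def)
  moreover have "y \<noteq> a" "y \<noteq> b"
    using simple_path_interior_inj[OF h_loop(1), of "s0 / 2" 0]
      simple_path_interior_inj[OF h_loop(1), of "s0 / 2" s0] h_param
    by (auto simp: y_def)
  ultimately obtain \<delta> where \<delta>: "0 < \<delta>"
    "\<And>z. z \<in> ball y \<delta> \<Longrightarrow> z \<notin> cball c r \<Longrightarrow> z \<in> R \<and> winding_number j z = 1"
    using outside_cball_near_A_in_R by metis
  have "y \<in> frontier (cball c r)"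
    using \<open>y \<in> A\<close> sphere_split r_pos by auto
  then have "y \<in> closure (- cball c r)"
    by (simp add: frontier_def closure_complement)
  then obtain z where "z \<notin> cball c r" "dist z y < \<delta>"
    using \<delta>(1) closure_approachable by blast
  then show ?thesis
    using \<delta>(2)[of z] that by (auto simp: dist_commute)
qed

lemma winding_number_j_R: "z \<in> R \<Longrightarrow> winding_number j z = 1"
proof (rule simple_closed_path_winding_number_inside[OF j_loop(1)])
  assume "\<And>z. z \<in> inside (path_image j) \<Longrightarrow> winding_number j z = -1"
  moreover obtain z0 where "z0 \<in> R" "winding_number j z0 = 1"
    using exists_R_outside_cball by metis
  ultimately show ?thesis
    using j_loop(3) by (force simp: R_def)
qed (use j_loop(3) in \<open>auto simp: R_def\<close>)

text \<open>Near an inner point x of G the loop through g[t0,1] and h[0,s0] has a constant winding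
  number k. Points of R near x give 1 + k = winding_number g \<in> {-1, 0, 1}, so k \<noteq> 1; points of
  Int C near x then have winding_number j = 1 - k \<noteq> 0.\<close>

lemma inside_C_near_G_in_R:
  assumes "x \<in> G" "x \<noteq> a" "x \<noteq> b"
  obtains \<delta> where "0 < \<delta>" "ball x \<delta> \<inter> inside C \<subseteq> R"
proof -
  let ?L = "subpath t0 1 g +++ subpath 0 s0 h"
  have L: "path ?L" "pathfinish ?L = pathstart ?L" "path_image ?L = g ` {t0..1} \<union> A"
    using subarc_paths subarc_images subarc_ends by (auto simp: path_image_join)
  have "x \<notin> g ` {t0..1} \<union> A"
    using assms G_Int_A G_Int_rest by blast
  then obtain \<delta> where \<delta>: "0 < \<delta>"
    "\<And>z. z \<in> ball x \<delta> \<Longrightarrow> z \<notin> g ` {t0..1} \<union> A \<and> winding_number ?L z = winding_number ?L x"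
    using winding_number_locally_constant[OF L(1,2)] L(3) by metis
  have "x \<in> closure R"
    using assms(1) frontier_R by (auto simp: frontier_def)
  then obtain q where q: "q \<in> R" "dist q x < \<delta>"
    using \<delta>(1) closure_approachable by blast
  then have "q \<in> ball x \<delta>" "q \<notin> C" "q \<notin> A"
    using \<delta>(2)[of q] R_Int_boundary C_split by (auto simp: dist_commute)
  then have "winding_number g q = 1 + winding_number ?L x"
    using winding_number_g_split[of q] winding_number_j_R[OF q(1)] \<delta>(2) by auto
  moreover have "winding_number g q \<in> {-1, 0, 1}"
    using simple_closed_path_winding_number_cases[OF g_loop(1,2)] \<open>q \<notin> C\<close> g_loop(3) by blast
  ultimately have "winding_number ?L x \<noteq> 1"
    by auto
  show ?thesis
  proof (rule that[OF \<delta>(1)], rule subsetI)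
    fix v assume v: "v \<in> ball x \<delta> \<inter> inside C"
    then have "v \<notin> C" "v \<notin> A"
      using \<delta>(2) inside_no_overlap by blast+
    then have "winding_number j v \<noteq> 0"
      using winding_number_g_split[of v] g_positive[of v] \<delta>(2)[of v] v
        \<open>winding_number ?L x \<noteq> 1\<close> by auto
    then show "v \<in> R"
      using in_R_iff_winding_number_j \<open>v \<notin> C\<close> \<open>v \<notin> A\<close> C_split by auto
  qed
qed

lemma farthest_point_in_G:
  assumes "x \<in> closure R" "\<And>z. z \<in> R \<Longrightarrow> dist p z \<le> dist p x"
  shows "x \<in> G"
proof -
  have "x \<notin> R"
  proof
    assume "x \<in> R"
    then obtain e where "0 < e" "ball x e \<subseteq> R"
      using R_open open_contains_ball by blast
    then show False
      using exists_farther_point_nearby[of e x p] assms(2) by fastforce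
  qed
  moreover have "x \<notin> A - {a, b}"
  proof
    assume x: "x \<in> A - {a, b}"
    then obtain \<delta> where \<delta>: "0 < \<delta>"
      "\<And>z. z \<in> ball x \<delta> \<Longrightarrow> z \<notin> cball c r \<Longrightarrow> z \<in> R \<and> winding_number j z = 1"
      using outside_cball_near_A_in_R by blast
    have "x \<in> sphere c r"
      using x sphere_split by blast
    then show False
      using exists_farther_point_outside_cball[OF _ r_pos \<delta>(1), of x c p] \<delta>(2) assms(2) by fastforce
  qed
  moreover have "closure R = R \<union> G \<union> A"
    using R_open frontier_R closure_Un_frontier[of R] by (simp add: interior_open Un_assoc)
  ultimately show ?thesis
    using assms(1) ends_in_G by blast
qed

text \<open>Move the center p from c towards c0: at c the farthest point of closure R is farther
  than r = dist c a = dist c b, at c0 it is nearer than 1, and once p has left c the points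
  a, b are nearer than 1. Connectedness of the segment yields a center with both
  properties.\<close>

lemma exists_center_with_small_max_dist:
  assumes "G \<subseteq> ball c0 1" "r \<le> 1"
  obtains p where "max_dist (closure R) p < 1"
    "dist p a < max_dist (closure R) p" "dist p b < max_dist (closure R) p"
proof -
  define K where "K = closure R"
  have K: "compact K" "K \<noteq> {}" "R \<subseteq> K"
    using R_bounded R_nonempty by (auto simp: K_def compact_closure closure_subset)
  define M where "M t = max_dist K (linepath c c0 t)" for t
  define f where "f t = 1 - M t" for t
  define \<phi> where "\<phi> t = M t - max (dist (linepath c c0 t) a) (dist (linepath c c0 t) b)" for t
  have "continuous_on {0..1} M"
    unfolding M_def
    by (rule continuous_on_compose2[OF continuous_on_max_dist[OF K(1,2)]])
      (auto simp: linepath_def intro!: continuous_intros)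
  then have cont: "continuous_on {0..1} f" "continuous_on {0..1} \<phi>"
    unfolding f_def \<phi>_def by (auto simp: linepath_def intro!: continuous_intros)
  obtain z0 where "z0 \<in> R" "z0 \<notin> cball c r"
    using exists_R_outside_cball by metis
  have start: "linepath c c0 0 = c" and finish: "linepath c c0 1 = c0"
    by (simp_all add: linepath_def)
  have "r < M 0"
    using \<open>z0 \<notin> cball c r\<close> dist_le_max_dist[of K z0 c] \<open>z0 \<in> R\<close> K compact_imp_bounded
    by (force simp: M_def start)
  then have \<phi>0: "0 < \<phi> 0"
    using ends_on_sphere by (simp add: \<phi>_def start dist_commute)
  have f1: "0 < f 1"
  proof -
    obtain x where x: "x \<in> K" "dist c0 x = max_dist K c0"
      using max_dist_attained[OF K(1,2)] .
    then have "x \<in> G"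
      using farthest_point_in_G[of x c0] dist_le_max_dist[of K _ c0] K compact_imp_bounded
      by (auto simp: K_def)
    then have "dist c0 x < 1"
      using assms(1) by auto
    then show ?thesis
      by (simp add: f_def M_def finish flip: x(2))
  qed
  have "0 < f t \<or> 0 < \<phi> t" if t: "t \<in> {0..1}" for t
  proof (cases "t = 0")
    case False
    then have "dist (linepath c c0 t) q < 1" if "q \<in> {a, b}" for q
      using that t ends_on_sphere ends_in_G assms
      by (intro dist_linepath_less) (auto simp: dist_commute)
    then have "max (dist (linepath c c0 t) a) (dist (linepath c c0 t) b) < 1"
      by simp
    then show ?thesis
      unfolding f_def \<phi>_def by linarith
  qed (use \<phi>0 in auto)
  then obtain t where "0 < f t" "0 < \<phi> t"
    using connected_positive_overlap[OF connected_Icc cont, of 1 0] f1 \<phi>0 by auto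
  then have "M t < 1" "dist (linepath c c0 t) a < M t" "dist (linepath c c0 t) b < M t"
    by (simp_all add: f_def \<phi>_def)
  then show ?thesis
    unfolding M_def K_def by (rule that)
qed

lemma not_bounded_convex_curvature:
  assumes "G \<subseteq> ball c0 1" "r \<le> 1"
  shows "\<not> bounded_convex_curvature C"
proof
  assume bcc: "bounded_convex_curvature C"
  define K where "K = closure R"
  have K: "compact K" "K \<noteq> {}" "R \<subseteq> K"
    using R_bounded R_nonempty by (auto simp: K_def compact_closure closure_subset)
  obtain p where p: "max_dist K p < 1" "dist p a < max_dist K p" "dist p b < max_dist K p"
    using exists_center_with_small_max_dist[OF assms] unfolding K_def by metis
  obtain x where x: "x \<in> K" "dist p x = max_dist K p"
    using max_dist_attained[OF K(1,2)] .
  then have "x \<in> G" "x \<noteq> a" "x \<noteq> b"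
    using farthest_point_in_G[of x p] dist_le_max_dist[of K _ p] K compact_imp_bounded p
    by (auto simp: K_def)
  then obtain \<delta> where \<delta>: "0 < \<delta>" "ball x \<delta> \<inter> inside C \<subseteq> R"
    using inside_C_near_G_in_R by metis
  obtain u \<epsilon> where u: "x \<in> sphere u 1" "0 < \<epsilon>" "ball x \<epsilon> \<inter> ball u 1 \<subseteq> inside C"
    using bcc \<open>x \<in> G\<close> C_split unfolding bounded_convex_curvature_def by blast
  obtain z where "z \<in> ball x (min \<delta> \<epsilon>)" "z \<in> ball u 1" "dist p x < dist p z"
    using exists_farther_point_in_ball[OF u(1), of p "min \<delta> \<epsilon>"] x p \<delta> u by auto
  moreover from calculation have "z \<in> ball x \<delta>" "z \<in> ball x \<epsilon>"
    by auto
  with \<open>z \<in> ball u 1\<close> have "z \<in> K"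
    using \<delta>(2) u(3) K(3) by blast
  ultimately show False
    using dist_le_max_dist[of K z p] K compact_imp_bounded x by force
qed

end

theorem lemma3:
  fixes C :: "complex set" and a b c0 c :: complex and r :: real
  assumes "jordan_curve C"
    and "a \<in> C" and "b \<in> C" and "a \<noteq> b"
    and "pos_arc C a b \<subseteq> ball c0 1"
    and "0 < r" and "r \<le> 1"
    and "pos_arc C a b \<inter> closure (ball c r) = {a, b}"
    and "winds_positively C c r a b"
  shows "\<not> bounded_convex_curvature C"
proof -
  obtain g t0 where g: "pos_param C g" "g 0 = a" "0 < t0" "t0 < 1" "g t0 = b"
    "pos_arc C a b = g ` {0..t0}"
    using pos_arc_eq_image[OF assms(1-4)] .
  have winds: "a \<in> sphere c r" "b \<in> sphere c r"
    "ball c r \<inter> inside (pos_arc C a b \<union> pos_arc (sphere c r) a b) = {}"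
    using assms(9) unfolding winds_positively_def by auto
  obtain h s0 where h: "pos_param (sphere c r) h" "h 0 = a" "0 < s0" "s0 < 1" "h s0 = b"
    "pos_arc (sphere c r) a b = h ` {0..s0}"
    using pos_arc_eq_image[OF jordan_curve_sphere[OF assms(6)] winds(1,2) assms(4)] .
  interpret arc_around_disk C g h t0 s0 r a b c
    using g h winds(3) assms(4,6,8) by unfold_locales (simp_all add: closure_ball)
  show ?thesis
    using not_bounded_convex_curvature[of c0] assms(5,7) g(6) by (simp add: G_def)
qed

end
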